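(* Let $E:\mathbb{R}^M\to\mathbb{R}$ be the discretized Lifshitz–Petrich energy described in the context. Let $\bar U\in\mathbb{R}^M$ and $U\in\mathbb{R}^M$ be states lying in the generalized quadratic region of a generalized local minimum of $E$ (so $H(U)$ and $H(\bar U)$ have no negative eigenvalues), and suppose $\dim\mathcal{W}^k(U)\le\dim\mathcal{W}^k(\bar U)$ and $\|\sin\Theta(\mathcal{W}^k(U),\mathcal{W}^k(\bar U))\|_2<1$. Then every solution $\bm v$ of the optimization problem $$\min_{\bm v\in\mathbb{R}^M}\langle\bm v,H(U)\bm v\rangle\quad\text{s.t.}\quad\langle\bm v,\bm v\rangle=1,\ \ \bm v\perp\mathcal{W}^k(\bar U)$$ has an ascent component, i.e. its orthogonal projection onto $\mathcal{W}^s(U)$ is nonzero.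
   Context: Setting: fix an invertible lattice matrix $\bm A\in\mathbb{R}^{n\times n}$ and $\bm B$ with $\bm A\bm B^T=2\pi I$; grid $\Omega_N=\{\bm A(j_1/N,\dots,j_n/N)^T:0\le j_i\le N-1\}$ with $M=N^n$ points; $U\in\mathbb{R}^M$ is a grid function; $\langle f,g\rangle=\frac1M\sum_s f(\bm r_s)\overline{g(\bm r_s)}$. $\mathcal{F}_M$ is the discrete Fourier transform over $\mathbb{K}_N^n=\{\bm k\in\mathbb{Z}^n:-N/2\le k_j<N/2\}$, $D$ is diagonal with entries $[q_1^2-|\bm B\bm k|^2]^2[q_2^2-|\bm B\bm k|^2]^2$, $\varepsilon,\alpha\in\mathbb{R}$. Energy $E(U)=\tfrac12\langle U,\mathcal{F}_M^{-1}D\mathcal{F}_MU\rangle+\frac1M\sum_s(-\tfrac\varepsilon2u_s^2-\tfrac\alpha3u_s^3+\tfrac14u_s^4)$, gradient $\nabla E(U)=\mathcal{F}_M^{-1}D\mathcal{F}_MU+\operatorname{diag}(-\varepsilon-\alpha U+U^2)U$, Hessian $H(U)=\mathcal{F}_M^{-1}D\mathcal{F}_M+\operatorname{diag}(-\varepsilon-2\alpha U+3U^2)$ (a real symmetric matrix). A generalized local minimum (GLM) is a critical point ($\nabla E=0$) whose Hessian has no negative eigenvalues. The generalized quadratic region (GQR) of a generalized critical point $U^*$ is a region around $U^*$ on which $H(U)$ has the same number of negative eigenvalues as $H(U^* )$. $\mathcal{W}^k(U)$, $\mathcal{W}^s(U)$ are the spans of eigenvectors of $H(U)$ with zero, resp.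 positive, eigenvalues. Principal angles: for subspaces $\mathcal{W},\widehat{\mathcal{W}}\subset\mathbb{R}^M$ with $\dim\mathcal{W}=d\le\dim\widehat{\mathcal{W}}$, the angles $0\le\theta_1\le\dots\le\theta_d\le\pi/2$ are defined recursively by $\cos\theta_i=\max\{\bm u^T\bm v/(\|\bm u\|_2\|\bm v\|_2):\bm u\in\mathcal{W},\bm u\perp\bm u_1,\dots,\bm u_{i-1},\ \bm v\in\widehat{\mathcal{W}},\bm v\perp\bm v_1,\dots,\bm v_{i-1}\}$, attained at $(\bm u_i,\bm v_i)$; $\sin\Theta(\mathcal{W},\widehat{\mathcal{W}})=\operatorname{diag}(\sin\theta_1,\dots,\sin\theta_d)$, so $\|\sin\Theta(\mathcal{W},\widehat{\mathcal{W}})\|_2=\sin\theta_d$. *)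

theory Defs
  imports "HOL-Analysis.Analysis"
begin

text \<open>Spatial dimension n = CARD('n).  Grid points are indexed by a finite type 'g together
  with a bijection grid :: 'g => ('n => nat) onto the index set {0..N-1}^n, so that
  R^M is real^'g with M = CARD('g) = N^n.\<close>

definition grid_pt :: "real^'n^'n \<Rightarrow> nat \<Rightarrow> ('g \<Rightarrow> 'n \<Rightarrow> nat) \<Rightarrow> 'g \<Rightarrow> real^'n" where
  "grid_pt A N grid s = A *v (\<chi> i. real (grid s i) / real N)"

definition modes :: "nat \<Rightarrow> ('n::finite \<Rightarrow> int) set" where
  "modes N = {k. \<forall>i. - (real N / 2) \<le> real_of_int (k i) \<and> real_of_int (k i) < real N / 2}"

definition freq :: "real^'n^'n \<Rightarrow> ('n \<Rightarrow> int) \<Rightarrow> real^'n" where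
  "freq B k = B *v (\<chi> i. real_of_int (k i))"

definition LP_symbol :: "real \<Rightarrow> real \<Rightarrow> real^'n^'n \<Rightarrow> ('n \<Rightarrow> int) \<Rightarrow> real" where
  "LP_symbol q1 q2 B k =
     (q1^2 - (norm (freq B k))^2)^2 * (q2^2 - (norm (freq B k))^2)^2"

definition DFT :: "real^'n^'n \<Rightarrow> real^'n^'n \<Rightarrow> nat \<Rightarrow> ('g::finite \<Rightarrow> 'n::finite \<Rightarrow> nat)
                    \<Rightarrow> real^'g \<Rightarrow> ('n \<Rightarrow> int) \<Rightarrow> complex" where
  "DFT A B N grid U k =
     (1 / of_nat CARD('g)) *
     (\<Sum>s\<in>UNIV. complex_of_real (U $ s) *
                  exp (- \<i> * complex_of_real (freq B k \<bullet> grid_pt A N grid s)))"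

definition IDFT :: "real^'n^'n \<Rightarrow> real^'n^'n \<Rightarrow> nat \<Rightarrow> ('g::finite \<Rightarrow> 'n::finite \<Rightarrow> nat)
                    \<Rightarrow> (('n \<Rightarrow> int) \<Rightarrow> complex) \<Rightarrow> 'g \<Rightarrow> complex" where
  "IDFT A B N grid W s =
     (\<Sum>k\<in>modes N. W k * exp (\<i> * complex_of_real (freq B k \<bullet> grid_pt A N grid s)))"

text \<open>The linear operator F_M^{-1} D F_M acting on real grid functions (real part taken).\<close>
definition LP_lin :: "real^'n^'n \<Rightarrow> real^'n^'n \<Rightarrow> nat \<Rightarrow> ('g::finite \<Rightarrow> 'n::finite \<Rightarrow> nat)
                      \<Rightarrow> real \<Rightarrow> real \<Rightarrow> real^'g \<Rightarrow> real^'g" where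
  "LP_lin A B N grid q1 q2 U =
     (\<chi> s. Re (IDFT A B N grid
                 (\<lambda>k. complex_of_real (LP_symbol q1 q2 B k) * DFT A B N grid U k) s))"

definition gip :: "real^'g::finite \<Rightarrow> real^'g \<Rightarrow> real" where
  "gip f g = (1 / real CARD('g)) * (\<Sum>s\<in>UNIV. f $ s * g $ s)"

definition LP_energy :: "real^'n^'n \<Rightarrow> real^'n^'n \<Rightarrow> nat \<Rightarrow> ('g::finite \<Rightarrow> 'n::finite \<Rightarrow> nat)
      \<Rightarrow> real \<Rightarrow> real \<Rightarrow> real \<Rightarrow> real \<Rightarrow> real^'g \<Rightarrow> real" where
  "LP_energy A B N grid q1 q2 \<epsilon> \<alpha> U =
     1/2 * gip U (LP_lin A B N grid q1 q2 U)
     + (1 / real CARD('g)) * (\<Sum>s\<in>UNIV. - \<epsilon>/2 * (U$s)^2 - \<alpha>/3 * (U$s)^3 + 1/4 * (U$s)^4)"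

definition LP_grad :: "real^'n^'n \<Rightarrow> real^'n^'n \<Rightarrow> nat \<Rightarrow> ('g::finite \<Rightarrow> 'n::finite \<Rightarrow> nat)
      \<Rightarrow> real \<Rightarrow> real \<Rightarrow> real \<Rightarrow> real \<Rightarrow> real^'g \<Rightarrow> real^'g" where
  "LP_grad A B N grid q1 q2 \<epsilon> \<alpha> U =
     LP_lin A B N grid q1 q2 U + (\<chi> s. (- \<epsilon> - \<alpha> * U$s + (U$s)^2) * U$s)"

definition LP_hess :: "real^'n^'n \<Rightarrow> real^'n^'n \<Rightarrow> nat \<Rightarrow> ('g::finite \<Rightarrow> 'n::finite \<Rightarrow> nat)
      \<Rightarrow> real \<Rightarrow> real \<Rightarrow> real \<Rightarrow> real \<Rightarrow> real^'g \<Rightarrow> real^'g^'g" where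
  "LP_hess A B N grid q1 q2 \<epsilon> \<alpha> U =
     (\<chi> s t. LP_lin A B N grid q1 q2 (axis t 1) $ s
             + (if s = t then - \<epsilon> - 2 * \<alpha> * U$s + 3 * (U$s)^2 else 0))"

definition is_eigval :: "real^'m^'m \<Rightarrow> real \<Rightarrow> bool" where
  "is_eigval H c \<longleftrightarrow> (\<exists>v. v \<noteq> 0 \<and> H *v v = c *\<^sub>R v)"

definition neg_index :: "real^'m^'m \<Rightarrow> nat" where
  "neg_index H = (\<Sum>c\<in>{c. c < 0 \<and> is_eigval H c}. dim {v. H *v v = c *\<^sub>R v})"

definition no_neg_eigval :: "real^'m^'m \<Rightarrow> bool" where
  "no_neg_eigval H \<longleftrightarrow> (\<forall>c. is_eigval H c \<longrightarrow> c \<ge> 0)"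

definition Wk :: "real^'m^'m \<Rightarrow> (real^'m) set" where
  "Wk H = span {v. v \<noteq> 0 \<and> H *v v = 0 *\<^sub>R v}"

definition Ws :: "real^'m^'m \<Rightarrow> (real^'m) set" where
  "Ws H = span {v. \<exists>c>0. v \<noteq> 0 \<and> H *v v = c *\<^sub>R v}"

definition orth_proj :: "(real^'m) set \<Rightarrow> real^'m \<Rightarrow> real^'m" where
  "orth_proj W v = (THE p. p \<in> W \<and> (\<forall>w\<in>W. (v - p) \<bullet> w = 0))"

definition principal_seq :: "(real^'m) set \<Rightarrow> (real^'m) set \<Rightarrow> (nat \<Rightarrow> real^'m)
                              \<Rightarrow> (nat \<Rightarrow> real^'m) \<Rightarrow> bool" where
  "principal_seq W W' us vs \<longleftrightarrow>
     (\<forall>i < dim W.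
        us i \<in> W \<and> vs i \<in> W' \<and> norm (us i) = 1 \<and> norm (vs i) = 1 \<and>
        (\<forall>j<i. us i \<bullet> us j = 0 \<and> vs i \<bullet> vs j = 0) \<and>
        (\<forall>u\<in>W. \<forall>v\<in>W'. u \<noteq> 0 \<longrightarrow> v \<noteq> 0 \<longrightarrow> (\<forall>j<i. u \<bullet> us j = 0 \<and> v \<bullet> vs j = 0) \<longrightarrow>
            (u \<bullet> v) / (norm u * norm v) \<le> us i \<bullet> vs i))"

text \<open>Principal angles theta_1 <= ... <= theta_d (0-indexed here), cos theta_i = us i . vs i.\<close>
definition principal_angles :: "(real^'m) set \<Rightarrow> (real^'m) set \<Rightarrow> nat \<Rightarrow> real" where
  "principal_angles W W' =
     (SOME \<theta>. \<exists>us vs. principal_seq W W' us vs \<and> (\<forall>i. \<theta> i = arccos (us i \<bullet> vs i)))"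

text \<open>The 2-norm of sin Theta(W, W') = diag(sin theta_1, ..., sin theta_d), i.e. sin theta_d
  (and 0 if d = 0).\<close>
definition sin_Theta_norm :: "(real^'m) set \<Rightarrow> (real^'m) set \<Rightarrow> real" where
  "sin_Theta_norm W W' =
     (if dim W = 0 then 0 else sin (principal_angles W W' (dim W - 1)))"

definition is_GLM :: "real^'n^'n \<Rightarrow> real^'n^'n \<Rightarrow> nat \<Rightarrow> ('g::finite \<Rightarrow> 'n::finite \<Rightarrow> nat)
      \<Rightarrow> real \<Rightarrow> real \<Rightarrow> real \<Rightarrow> real \<Rightarrow> real^'g \<Rightarrow> bool" where
  "is_GLM A B N grid q1 q2 \<epsilon> \<alpha> U \<longleftrightarrow>
     LP_grad A B N grid q1 q2 \<epsilon> \<alpha> U = 0 \<and> no_neg_eigval (LP_hess A B N grid q1 q2 \<epsilon> \<alpha> U)"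

definition in_GQR :: "real^'n^'n \<Rightarrow> real^'n^'n \<Rightarrow> nat \<Rightarrow> ('g::finite \<Rightarrow> 'n::finite \<Rightarrow> nat)
      \<Rightarrow> real \<Rightarrow> real \<Rightarrow> real \<Rightarrow> real \<Rightarrow> real^'g \<Rightarrow> real^'g \<Rightarrow> bool" where
  "in_GQR A B N grid q1 q2 \<epsilon> \<alpha> Ustar U \<longleftrightarrow>
     neg_index (LP_hess A B N grid q1 q2 \<epsilon> \<alpha> U) = neg_index (LP_hess A B N grid q1 q2 \<epsilon> \<alpha> Ustar)"

definition is_constrained_min :: "real^'g::finite^'g \<Rightarrow> (real^'g) set \<Rightarrow> real^'g \<Rightarrow> bool" where
  "is_constrained_min H W v \<longleftrightarrow>
     gip v v = 1 \<and> (\<forall>w\<in>W. gip v w = 0) \<and>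
     (\<forall>x. gip x x = 1 \<and> (\<forall>w\<in>W. gip x w = 0) \<longrightarrow> gip v (H *v v) \<le> gip x (H *v x))"

end

theory Submission
  imports Defs
begin

(* The Hessian is symmetric for every A, B and grid, and H(U) has no negative eigenvalue because
   it has the same negative index as the Hessian at the generalized local minimum.  Hence R^M is
   the orthogonal sum of W^k(U) and W^s(U), so a feasible v without component in W^s(U) lies in
   W^k(U) while being orthogonal to W^k(Ubar).  Such a vector forces the largest principal angle
   between the two kernels to be pi/2, contradicting sin theta_d < 1. *)

lemma linear_le_quadratic_imp_eq_0:
  fixes a b :: real
  assumes "\<And>t. t * b \<le> a * t\<^sup>2"
  shows "b = 0"
proof (rule ccontr)
  assume "b \<noteq> 0"
  define s where "s = 1 / (\<bar>a\<bar> + 1)"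
  have "s > 0" "a * s < 1"
    unfolding s_def by (auto simp: field_simps abs_if)
  have "(b * s) * b \<le> a * (b * s)\<^sup>2" by (rule assms)
  then have "b\<^sup>2 * s * (1 - a * s) \<le> 0" by (simp add: algebra_simps power2_eq_square)
  moreover have "b\<^sup>2 * s * (1 - a * s) > 0" using \<open>b \<noteq> 0\<close> \<open>s > 0\<close> \<open>a * s < 1\<close> by simp
  ultimately show False by simp
qed

lemma inner_eq_0_if_norm_le_norm_add_scaleR:
  fixes u x :: "'a::real_inner"
  assumes "\<And>t. norm u \<le> norm (u + t *\<^sub>R x)"
  shows "u \<bullet> x = 0"
proof -
  have "t * (- 2 * (u \<bullet> x)) \<le> (x \<bullet> x) * t\<^sup>2" for t
  proof -
    have "(norm u)\<^sup>2 \<le> (norm (u + t *\<^sub>R x))\<^sup>2"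
      using assms by (simp add: power_mono)
    also have "\<dots> = (norm u)\<^sup>2 + t * (2 * (u \<bullet> x)) + (x \<bullet> x) * t\<^sup>2"
      unfolding power2_norm_eq_inner
      by (simp add: inner_add_left inner_add_right inner_commute power2_eq_square algebra_simps)
    finally show ?thesis by (simp add: algebra_simps)
  qed
  then show ?thesis using linear_le_quadratic_imp_eq_0 by fastforce
qed

section \<open>Symmetric matrices\<close>

lemma symmetric_matrix_inner:
  fixes H :: "real^'m::finite^'m"
  assumes "transpose H = H"
  shows "(H *v x) \<bullet> y = x \<bullet> (H *v y)"
  by (metis assms dot_lmul_matrix vector_transpose_matrix)

lemma symmetric_matrix_eigenvectors_orthogonal:
  fixes H :: "real^'m::finite^'m"
  assumes "transpose H = H" "H *v x = a *\<^sub>R x" "H *v y = b *\<^sub>R y" "a \<noteq> b"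
  shows "x \<bullet> y = 0"
proof -
  have "a * (x \<bullet> y) = b * (x \<bullet> y)"
    using symmetric_matrix_inner[OF assms(1), of x y] assms(2,3) by simp
  then show ?thesis using assms(4) by simp
qed

lemma symmetric_matrix_finite_eigenvalues:
  fixes H :: "real^'m::finite^'m"
  assumes sym: "transpose H = H"
  shows "finite {c. is_eigval H c}"
proof -
  define vec where "vec c = (SOME v. v \<noteq> 0 \<and> H *v v = c *\<^sub>R v)" for c
  have vec: "vec c \<noteq> 0" "H *v vec c = c *\<^sub>R vec c" if "is_eigval H c" for c
    using someI_ex[OF that[unfolded is_eigval_def]] unfolding vec_def by auto
  let ?E = "{c. is_eigval H c}"
  have inj: "inj_on vec ?E"
    by (rule inj_onI) (metis mem_Collect_eq scaleR_cancel_right vec)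
  have "finite (vec ` ?E)"
  proof (rule pairwise_orthogonal_imp_finite)
    show "pairwise orthogonal (vec ` ?E)"
      unfolding pairwise_def orthogonal_def
      using symmetric_matrix_eigenvectors_orthogonal[OF sym] vec by fastforce
  qed
  then show ?thesis using inj by (rule finite_imageD)
qed

lemma neg_index_eq_0_iff:
  fixes H :: "real^'m::finite^'m"
  assumes "transpose H = H"
  shows "neg_index H = 0 \<longleftrightarrow> no_neg_eigval H"
proof
  assume index: "neg_index H = 0"
  have "finite {c. c < 0 \<and> is_eigval H c}"
    using symmetric_matrix_finite_eigenvalues[OF assms] by (rule rev_finite_subset) auto
  then have eigenspace_trivial: "dim {v. H *v v = c *\<^sub>R v} = 0" if "c < 0" "is_eigval H c" for c
    using index that unfolding neg_index_def by simp
  show "no_neg_eigval H"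
    unfolding no_neg_eigval_def
  proof (intro allI impI)
    fix c assume eig: "is_eigval H c"
    then obtain v where "v \<noteq> 0" "H *v v = c *\<^sub>R v" unfolding is_eigval_def by blast
    then have "\<not> {v. H *v v = c *\<^sub>R v} \<subseteq> {0}" by blast
    then show "0 \<le> c" using eigenspace_trivial[OF _ eig] dim_eq_0 by (meson not_le)
  qed
next
  assume "no_neg_eigval H"
  then have "{c. c < 0 \<and> is_eigval H c} = {}"
    unfolding no_neg_eigval_def by force
  then show "neg_index H = 0"
    unfolding neg_index_def by (simp only: sum.empty)
qed

lemma rayleigh_maximizer_is_eigenvector:
  fixes H :: "real^'m::finite^'m"
  assumes sym: "transpose H = H" and T: "subspace T" and inv: "\<And>x. x \<in> T \<Longrightarrow> H *v x \<in> T"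
    and y: "y \<in> T" "y \<bullet> y = 1"
    and max: "\<And>w. w \<in> T \<Longrightarrow> w \<bullet> (H *v w) \<le> (y \<bullet> (H *v y)) * (w \<bullet> w)"
  shows "H *v y = (y \<bullet> (H *v y)) *\<^sub>R y"
proof -
  define \<mu> where "\<mu> = y \<bullet> (H *v y)"
  define r where "r = H *v y - \<mu> *\<^sub>R y"
  have "r \<in> T" unfolding r_def using inv y T by (simp add: subspace_diff subspace_scale)
  have "y \<bullet> r = 0" unfolding r_def \<mu>_def using y by (simp add: inner_diff_right)
  have "r \<bullet> (H *v y) = r \<bullet> r"
    unfolding r_def using \<open>y \<bullet> r = 0\<close>[unfolded r_def]
    by (simp add: inner_diff_left inner_diff_right inner_commute algebra_simps)
  have "t * (2 * (r \<bullet> r)) \<le> (\<mu> * (r \<bullet> r) - r \<bullet> (H *v r)) * t\<^sup>2" for t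
  proof -
    have "y + t *\<^sub>R r \<in> T" using y \<open>r \<in> T\<close> T by (simp add: subspace_add subspace_scale)
    from max[OF this] have
      "\<mu> + 2 * t * (r \<bullet> (H *v y)) + t\<^sup>2 * (r \<bullet> (H *v r))
         \<le> \<mu> * (1 + 2 * t * (y \<bullet> r) + t\<^sup>2 * (r \<bullet> r))"
      using y symmetric_matrix_inner[OF sym, of r y]
      by (simp add: \<mu>_def matrix_vector_right_distrib matrix_vector_mult_scaleR inner_add_left
          inner_add_right inner_commute power2_eq_square algebra_simps)
    then show ?thesis
      using \<open>y \<bullet> r = 0\<close> \<open>r \<bullet> (H *v y) = r \<bullet> r\<close> by (simp add: algebra_simps)
  qed
  then have "2 * (r \<bullet> r) = 0" by (rule linear_le_quadratic_imp_eq_0)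
  then show ?thesis unfolding r_def \<mu>_def by simp
qed

lemma symmetric_matrix_invariant_subspace_has_eigenvector:
  fixes H :: "real^'m::finite^'m"
  assumes sym: "transpose H = H" and T: "subspace T" and inv: "\<And>x. x \<in> T \<Longrightarrow> H *v x \<in> T"
    and "x \<in> T" "x \<noteq> 0"
  obtains z c where "z \<in> T" "z \<noteq> 0" "H *v z = c *\<^sub>R z"
proof -
  let ?S = "sphere 0 1 \<inter> T"
  have "x /\<^sub>R norm x \<in> ?S" using assms T by (simp add: subspace_scale)
  moreover have "compact ?S" by (intro compact_Int_closed compact_sphere closed_subspace T)
  moreover have "continuous_on ?S (\<lambda>w. w \<bullet> (H *v w))" by (intro continuous_intros)
  ultimately obtain y where y: "y \<in> ?S" and y_max: "\<And>w. w \<in> ?S \<Longrightarrow> w \<bullet> (H *v w) \<le> y \<bullet> (H *v y)"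
    using continuous_attains_sup[of ?S] by blast
  have "w \<bullet> (H *v w) \<le> (y \<bullet> (H *v y)) * (w \<bullet> w)" if "w \<in> T" for w
  proof (cases "w = 0")
    case False
    have "w /\<^sub>R norm w \<in> ?S" using False that T by (simp add: subspace_scale)
    from y_max[OF this] have "(w \<bullet> (H *v w)) / (norm w)\<^sup>2 \<le> y \<bullet> (H *v y)"
      by (simp add: matrix_vector_mult_scaleR power2_eq_square divide_inverse mult_ac)
    then show ?thesis using False by (simp add: divide_le_eq power2_norm_eq_inner)
  qed simp
  moreover have "y \<bullet> y = 1" using y by (simp add: norm_eq_1)
  ultimately have "H *v y = (y \<bullet> (H *v y)) *\<^sub>R y"
    using y by (intro rayleigh_maximizer_is_eigenvector[OF sym T inv]) auto
  moreover have "y \<noteq> 0" using y by auto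
  ultimately show ?thesis using that y by blast
qed

lemma Wk_eq_kernel: "Wk H = {x. H *v x = 0}"
proof -
  have "subspace {x. H *v x = 0}"
    by (auto simp: subspace_def matrix_vector_right_distrib matrix_vector_mult_scaleR)
  then show ?thesis
    unfolding Wk_def
    by (intro subset_antisym span_minimal) (auto intro: span_base span_zero)
qed

lemma subspace_Wk: "subspace (Wk H)"
  unfolding Wk_def by (rule subspace_span)

lemma subspace_Ws: "subspace (Ws H)"
  unfolding Ws_def by (rule subspace_span)

lemma Ws_invariant:
  assumes "w \<in> Ws H"
  shows "H *v w \<in> Ws H"
  using assms unfolding Ws_def
proof (induction rule: span_induct)
  case base
  show ?case
    by (auto simp: subspace_def matrix_vector_right_distrib matrix_vector_mult_scaleR
        intro: span_add span_scale span_zero)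
next
  case (step x)
  then obtain c where "H *v x = c *\<^sub>R x" by blast
  then show ?case using step by (simp add: span_base span_scale)
qed

lemma symmetric_matrix_kernel_orthogonal_Ws:
  fixes H :: "real^'m::finite^'m"
  assumes sym: "transpose H = H" and "H *v k = 0" and "w \<in> Ws H"
  shows "k \<bullet> w = 0"
  using assms(3) unfolding Ws_def
proof (induction rule: span_induct)
  case base
  show ?case by (auto simp: subspace_def inner_add_right)
next
  case (step x)
  then obtain c where "c > 0" "H *v x = c *\<^sub>R x" by blast
  then show ?case
    using symmetric_matrix_eigenvectors_orthogonal[OF sym, of k 0 x c] assms(2) by simp
qed

lemma orthogonal_Ws_imp_kernel:
  fixes H :: "real^'m::finite^'m"
  assumes sym: "transpose H = H" and psd: "no_neg_eigval H"
    and v: "\<And>w. w \<in> Ws H \<Longrightarrow> v \<bullet> w = 0"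
  shows "H *v v = 0"
proof -
  let ?K = "{x. H *v x = 0}"
  let ?T = "{x. (\<forall>w\<in>Ws H. x \<bullet> w = 0) \<and> (\<forall>z\<in>?K. x \<bullet> z = 0)}"
  have "subspace ?K" using subspace_Wk[of H] by (simp add: Wk_eq_kernel)
  then have span_K: "span ?K = ?K" by (rule span_eq_iff[THEN iffD2])
  obtain k r where k: "H *v k = 0" and r: "\<And>z. z \<in> ?K \<Longrightarrow> r \<bullet> z = 0" and "v = k + r"
    using orthogonal_subspace_decomp_exists[of ?K v, unfolded span_K orthogonal_def] by blast
  have "r \<in> ?T"
    using v r symmetric_matrix_kernel_orthogonal_Ws[OF sym k] \<open>v = k + r\<close>
    by (simp add: inner_add_left)
  \<comment> \<open>\<open>?T\<close> is \<open>H\<close>-invariant, so if nonzero it contains an eigenvector; having a nonnegative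
    eigenvalue, that eigenvector lies in the kernel or in \<open>Ws H\<close>, both orthogonal to \<open>?T\<close>.\<close>
  have "r = 0"
  proof (rule ccontr)
    assume "r \<noteq> 0"
    have "subspace ?T" by (auto simp: subspace_def inner_add_left)
    moreover have "H *v x \<in> ?T" if "x \<in> ?T" for x
    proof -
      have "(H *v x) \<bullet> w = x \<bullet> (H *v w)" for w by (rule symmetric_matrix_inner[OF sym])
      then show ?thesis using that Ws_invariant[of _ H] by simp
    qed
    ultimately obtain z c where z: "z \<in> ?T" "z \<noteq> 0" and eig: "H *v z = c *\<^sub>R z"
      using symmetric_matrix_invariant_subspace_has_eigenvector[OF sym, of ?T r] \<open>r \<in> ?T\<close> \<open>r \<noteq> 0\<close>
      by blast
    have "c \<ge> 0" using psd z eig unfolding no_neg_eigval_def is_eigval_def by blast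
    then have "z \<in> ?K \<or> z \<in> Ws H"
      using z eig unfolding Ws_def by (cases "c = 0") (auto intro: span_base)
    then have "z \<bullet> z = 0" using z by blast
    then show False using \<open>z \<noteq> 0\<close> by simp
  qed
  then show ?thesis using k \<open>v = k + r\<close> by simp
qed

section \<open>Orthogonal projection and principal angles\<close>

lemma orth_proj_eq_0_imp_orthogonal:
  fixes W :: "(real^'m::finite) set"
  assumes W: "subspace W" and "orth_proj W v = 0" and "w \<in> W"
  shows "v \<bullet> w = 0"
proof -
  have span_W: "span W = W" using W by (rule span_eq_iff[THEN iffD2])
  obtain p q where p: "p \<in> W" and q: "\<And>w. w \<in> W \<Longrightarrow> q \<bullet> w = 0" and "v = p + q"
    using orthogonal_subspace_decomp_exists[of W v, unfolded span_W orthogonal_def] by blast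
  have "orth_proj W v = p"
    unfolding orth_proj_def
  proof (rule the_equality)
    show "p \<in> W \<and> (\<forall>w\<in>W. (v - p) \<bullet> w = 0)" using p q \<open>v = p + q\<close> by simp
  next
    fix p' assume p': "p' \<in> W \<and> (\<forall>w\<in>W. (v - p') \<bullet> w = 0)"
    then have "p' - p \<in> W" using p W by (simp add: subspace_diff)
    then have "(v - p) \<bullet> (p' - p) - (v - p') \<bullet> (p' - p) = 0"
      using p' q \<open>v = p + q\<close> by simp
    then show "p' = p" by (simp add: inner_diff_left[symmetric])
  qed
  then show ?thesis using assms q \<open>v = p + q\<close> by simp
qed

definition principal_step :: "(real^'m::finite) set \<Rightarrow> (real^'m) set \<Rightarrow> (nat \<Rightarrow> real^'m)
                                 \<Rightarrow> (nat \<Rightarrow> real^'m) \<Rightarrow> nat \<Rightarrow> bool" where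
  "principal_step W W' us vs i \<longleftrightarrow>
     us i \<in> W \<and> vs i \<in> W' \<and> norm (us i) = 1 \<and> norm (vs i) = 1 \<and>
     (\<forall>j<i. us i \<bullet> us j = 0 \<and> vs i \<bullet> vs j = 0) \<and>
     (\<forall>u\<in>W. \<forall>v\<in>W'. u \<noteq> 0 \<longrightarrow> v \<noteq> 0 \<longrightarrow> (\<forall>j<i. u \<bullet> us j = 0 \<and> v \<bullet> vs j = 0) \<longrightarrow>
        (u \<bullet> v) / (norm u * norm v) \<le> us i \<bullet> vs i)"

lemma principal_seq_iff_principal_step:
  "principal_seq W W' us vs \<longleftrightarrow> (\<forall>i<dim W. principal_step W W' us vs i)"
  by (simp add: principal_seq_def principal_step_def)

lemma exists_unit_orthogonal_to_family:
  fixes W :: "(real^'m::finite) set"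
  assumes W: "subspace W" and e: "\<And>j. j < i \<Longrightarrow> e j \<in> W" and "i < dim W"
  shows "\<exists>u\<in>W. norm u = 1 \<and> (\<forall>j<i. u \<bullet> e j = 0)"
proof -
  have "dim (e ` {..<i}) \<le> i"
    by (metis card_image_le card_lessThan dim_le_card finite_imageI finite_lessThan span_superset
        order_trans)
  then have "span (e ` {..<i}) \<noteq> span W" using \<open>i < dim W\<close> by (metis dim_span not_le)
  moreover have "span (e ` {..<i}) \<subseteq> span W" using e by (intro span_mono) auto
  ultimately obtain x where "x \<noteq> 0" "x \<in> span W" "\<And>y. y \<in> span (e ` {..<i}) \<Longrightarrow> orthogonal x y"
    by (metis orthogonal_to_subspace_exists_gen psubsetI)
  moreover have "span W = W" using W by (rule span_eq_iff[THEN iffD2])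
  ultimately show ?thesis
    using W e by (intro bexI[of _ "x /\<^sub>R norm x"]) (simp_all add: span_base orthogonal_def subspace_scale)
qed

lemma exists_max_inner_unit_pair:
  fixes X Y :: "(real^'m::finite) set"
  assumes X: "subspace X" and Y: "subspace Y"
    and "x \<in> X" "norm x = 1" "y \<in> Y" "norm y = 1"
  obtains a b where "a \<in> X" "b \<in> Y" "norm a = 1" "norm b = 1"
    "\<And>u v. u \<in> X \<Longrightarrow> v \<in> Y \<Longrightarrow> u \<noteq> 0 \<Longrightarrow> v \<noteq> 0 \<Longrightarrow> (u \<bullet> v) / (norm u * norm v) \<le> a \<bullet> b"
proof -
  let ?P = "(sphere 0 1 \<inter> X) \<times> (sphere 0 1 \<inter> Y)"
  have "(x, y) \<in> ?P" using assms by simp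
  moreover have "compact ?P"
    by (intro compact_Times compact_Int_closed compact_sphere closed_subspace X Y)
  moreover have "continuous_on ?P (\<lambda>p. fst p \<bullet> snd p)" by (intro continuous_intros)
  ultimately obtain p where p: "p \<in> ?P" and p_max: "\<And>q. q \<in> ?P \<Longrightarrow> fst q \<bullet> snd q \<le> fst p \<bullet> snd p"
    using continuous_attains_sup[of ?P] by blast
  have "(u \<bullet> v) / (norm u * norm v) \<le> fst p \<bullet> snd p"
    if "u \<in> X" "v \<in> Y" "u \<noteq> 0" "v \<noteq> 0" for u v
  proof -
    have "(u /\<^sub>R norm u, v /\<^sub>R norm v) \<in> ?P" using that X Y by (simp add: subspace_scale)
    from p_max[OF this] show ?thesis by (simp add: divide_inverse mult_ac)
  qed
  with p that[of "fst p" "snd p"] show ?thesis by auto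
qed

lemma principal_step_extend:
  fixes W W' :: "(real^'m::finite) set"
  assumes W: "subspace W" and W': "subspace W'" and "dim W \<le> dim W'" and "i < dim W"
    and prev: "\<And>j. j < i \<Longrightarrow> principal_step W W' us vs j"
  shows "\<exists>a b. principal_step W W' (us(i := a)) (vs(i := b)) i"
proof -
  let ?U = "{u\<in>W. \<forall>j<i. u \<bullet> us j = 0}"
  let ?V = "{v\<in>W'. \<forall>j<i. v \<bullet> vs j = 0}"
  have U: "subspace ?U" and V: "subspace ?V"
    using W W' unfolding subspace_def by (auto simp: inner_add_left)
  have "\<And>j. j < i \<Longrightarrow> us j \<in> W" "\<And>j. j < i \<Longrightarrow> vs j \<in> W'"
    using prev unfolding principal_step_def by auto
  moreover have "i < dim W'" using \<open>i < dim W\<close> \<open>dim W \<le> dim W'\<close> by simp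
  ultimately obtain x y where "x \<in> ?U" "norm x = 1" "y \<in> ?V" "norm y = 1"
    using exists_unit_orthogonal_to_family[OF W, of i us] \<open>i < dim W\<close>
      exists_unit_orthogonal_to_family[OF W', of i vs] by blast
  obtain a b where "a \<in> ?U" "b \<in> ?V" "norm a = 1" "norm b = 1"
    "\<And>u v. u \<in> ?U \<Longrightarrow> v \<in> ?V \<Longrightarrow> u \<noteq> 0 \<Longrightarrow> v \<noteq> 0 \<Longrightarrow> (u \<bullet> v) / (norm u * norm v) \<le> a \<bullet> b"
    by (rule exists_max_inner_unit_pair[OF U V \<open>x \<in> ?U\<close> \<open>norm x = 1\<close> \<open>y \<in> ?V\<close> \<open>norm y = 1\<close>]) blast
  then have "principal_step W W' (us(i := a)) (vs(i := b)) i"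
    unfolding principal_step_def by auto
  then show ?thesis by blast
qed

lemma principal_seq_exists:
  fixes W W' :: "(real^'m::finite) set"
  assumes W: "subspace W" and W': "subspace W'" and "dim W \<le> dim W'"
  obtains us vs where "principal_seq W W' us vs"
proof -
  have "i \<le> dim W \<Longrightarrow> \<exists>us vs. \<forall>j<i. principal_step W W' us vs j" for i
  proof (induction i)
    case (Suc i)
    then obtain us vs where prev: "\<And>j. j < i \<Longrightarrow> principal_step W W' us vs j" by auto
    have "i < dim W" using Suc.prems by simp
    then obtain a b where new: "principal_step W W' (us(i := a)) (vs(i := b)) i"
      using principal_step_extend[OF W W' \<open>dim W \<le> dim W'\<close>, of i us vs] prev by blast
    have "principal_step W W' (us(i := a)) (vs(i := b)) j" if "j < i" for j
      using prev[OF that] that unfolding principal_step_def by auto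
    with new have "\<forall>j<Suc i. principal_step W W' (us(i := a)) (vs(i := b)) j"
      using less_Suc_eq by auto
    then show ?case by blast
  qed simp
  then show ?thesis using that unfolding principal_seq_iff_principal_step by blast
qed

lemma principal_seqD:
  assumes "principal_seq W W' us vs" and "i < dim W"
  shows "us i \<in> W" "vs i \<in> W'" "norm (us i) = 1" "norm (vs i) = 1"
    "\<And>j. j < i \<Longrightarrow> us i \<bullet> us j = 0" "\<And>j. j < i \<Longrightarrow> vs i \<bullet> vs j = 0"
  using assms unfolding principal_seq_def by blast+

lemma principal_seq_max:
  assumes ps: "principal_seq W W' us vs" and "i < dim W" and "u \<in> W" "v \<in> W'"
    and "\<And>j. j < i \<Longrightarrow> u \<bullet> us j = 0 \<and> v \<bullet> vs j = 0"
  shows "u \<bullet> v \<le> norm u * norm v * (us i \<bullet> vs i)"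
proof (cases "u = 0 \<or> v = 0")
  case False
  then have "(u \<bullet> v) / (norm u * norm v) \<le> us i \<bullet> vs i"
    using assms unfolding principal_seq_def by blast
  then show ?thesis using False by (simp add: pos_divide_le_eq mult_ac)
qed auto

lemma principal_cos_nonneg:
  assumes ps: "principal_seq W W' us vs" and "subspace W'" and "i < dim W"
  shows "0 \<le> us i \<bullet> vs i"
proof -
  have "us i \<bullet> (- vs i) \<le> us i \<bullet> vs i"
    using principal_seq_max[OF ps \<open>i < dim W\<close>, of "us i" "- vs i"] \<open>subspace W'\<close>
      principal_seqD[OF ps \<open>i < dim W\<close>] by (simp add: subspace_neg)
  then show ?thesis by simp
qed

lemma principal_cos_antimono:
  assumes ps: "principal_seq W W' us vs" and "k \<le> i" "i < dim W"
  shows "us i \<bullet> vs i \<le> us k \<bullet> vs k"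
  using principal_seq_max[OF ps, of k "us i" "vs i"] principal_seqD[OF ps \<open>i < dim W\<close>] assms
  by simp

lemma principal_vectors_span:
  assumes ps: "principal_seq W W' us vs"
  shows "W \<subseteq> span (us ` {..<dim W})"
proof -
  have orth: "us i \<bullet> us j = 0" if "i < dim W" "j < dim W" "i \<noteq> j" for i j
    using principal_seqD(5)[OF ps, of i j] principal_seqD(5)[OF ps, of j i] that
    by (cases "i < j") (auto simp: inner_commute)
  have unit: "norm (us i) = 1" if "i < dim W" for i
    using principal_seqD(3)[OF ps that] .
  have "inj_on us {..<dim W}"
  proof (rule inj_onI)
    fix i j assume "i \<in> {..<dim W}" "j \<in> {..<dim W}" "us i = us j"
    then show "i = j" using orth[of i j] unit[of j] by (force simp: norm_eq_1)
  qed
  then have "card (us ` {..<dim W}) = dim W" by (simp add: card_image)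
  moreover have "us ` {..<dim W} \<subseteq> W" using principal_seqD(1)[OF ps] by auto
  moreover have "independent (us ` {..<dim W})"
    by (rule pairwise_orthogonal_independent)
      (use orth unit in \<open>force simp: pairwise_def orthogonal_def\<close>)+
  ultimately show ?thesis using card_eq_dim[of "us ` {..<dim W}" W] by simp
qed

lemma principal_vector_inner_neq_0:
  assumes ps: "principal_seq W W' us vs" and "x \<in> W" "x \<noteq> 0"
  shows "\<exists>k. k < dim W \<and> x \<bullet> us k \<noteq> 0"
proof (rule ccontr)
  assume none: "\<nexists>k. k < dim W \<and> x \<bullet> us k \<noteq> 0"
  have "orthogonal x y" if "y \<in> span (us ` {..<dim W})" for y
    by (rule orthogonal_to_span[OF that]) (use none in \<open>auto simp: orthogonal_def\<close>)
  then have "orthogonal x x" using assms principal_vectors_span[OF ps] by blast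
  then show False using \<open>x \<noteq> 0\<close> by (simp add: orthogonal_self)
qed

lemma principal_cos_last_eq_0:
  fixes W W' :: "(real^'m::finite) set"
  assumes ps: "principal_seq W W' us vs" and W: "subspace W" and W': "subspace W'"
    and x: "x \<in> W" "x \<noteq> 0" and x_orth: "\<And>w. w \<in> W' \<Longrightarrow> x \<bullet> w = 0"
  shows "us (dim W - 1) \<bullet> vs (dim W - 1) = 0"
proof -
  obtain k where k: "k < dim W" "x \<bullet> us k \<noteq> 0"
    and least: "\<And>j. j < k \<Longrightarrow> \<not> (j < dim W \<and> x \<bullet> us j \<noteq> 0)"
    using principal_vector_inner_neq_0[OF ps x]
      exists_least_iff[of "\<lambda>k. k < dim W \<and> x \<bullet> us k \<noteq> 0"] by blast
  have uk: "us k \<in> W" "vs k \<in> W'" "norm (us k) = 1" "norm (vs k) = 1"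
    "\<And>j. j < k \<Longrightarrow> us k \<bullet> us j = 0 \<and> vs k \<bullet> vs j = 0"
    using principal_seqD[OF ps k(1)] by auto
  define c where "c = us k \<bullet> vs k"
  have "c \<ge> 0" unfolding c_def by (rule principal_cos_nonneg[OF ps W' k(1)])
  \<comment> \<open>Tilting \<open>us k\<close> towards \<open>x\<close> keeps it admissible and leaves its inner product with \<open>vs k\<close>
    unchanged; as \<open>x \<bullet> us k \<noteq> 0\<close>, some tilt is shorter than \<open>us k\<close>, which maximality
    only allows if \<open>c = 0\<close>.\<close>
  have tilt: "c \<le> norm (us k + t *\<^sub>R x) * c" for t
  proof -
    have "us k + t *\<^sub>R x \<in> W" using uk x W by (simp add: subspace_add subspace_scale)
    then have "(us k + t *\<^sub>R x) \<bullet> vs k \<le> norm (us k + t *\<^sub>R x) * c"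
      using principal_seq_max[OF ps k(1), of "us k + t *\<^sub>R x" "vs k"] uk least k(1)
      by (simp add: c_def inner_add_left)
    then show ?thesis using x_orth[OF uk(2)] by (simp add: c_def inner_add_left)
  qed
  have "c = 0"
  proof (rule ccontr)
    assume "c \<noteq> 0"
    with \<open>c \<ge> 0\<close> have "norm (us k) \<le> norm (us k + t *\<^sub>R x)" for t
      using tilt[of t] uk(3) by simp
    then have "us k \<bullet> x = 0" by (rule inner_eq_0_if_norm_le_norm_add_scaleR)
    with k(2) show False by (simp add: inner_commute)
  qed
  have "us (dim W - 1) \<bullet> vs (dim W - 1) \<le> c"
    unfolding c_def using k(1) by (intro principal_cos_antimono[OF ps]) auto
  moreover have "0 \<le> us (dim W - 1) \<bullet> vs (dim W - 1)"
    using k(1) by (intro principal_cos_nonneg[OF ps W']) auto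
  ultimately show ?thesis using \<open>c = 0\<close> by simp
qed

lemma sin_Theta_norm_eq_1_if_orthogonal:
  fixes W W' :: "(real^'m::finite) set"
  assumes W: "subspace W" and W': "subspace W'" and "dim W \<le> dim W'"
    and x: "x \<in> W" "x \<noteq> 0" and x_orth: "\<And>w. w \<in> W' \<Longrightarrow> x \<bullet> w = 0"
  shows "sin_Theta_norm W W' = 1"
proof -
  obtain us0 vs0 where "principal_seq W W' us0 vs0"
    using principal_seq_exists[OF W W' \<open>dim W \<le> dim W'\<close>] .
  then have "\<exists>\<theta> us vs. principal_seq W W' us vs \<and> (\<forall>i. \<theta> i = arccos (us i \<bullet> vs i))"
    by (intro exI[of _ "\<lambda>i. arccos (us0 i \<bullet> vs0 i)"]) blast
  from someI_ex[OF this] obtain us vs where ps: "principal_seq W W' us vs"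
    and angles: "\<And>i. principal_angles W W' i = arccos (us i \<bullet> vs i)"
    unfolding principal_angles_def by blast
  have "us (dim W - 1) \<bullet> vs (dim W - 1) = 0"
    by (rule principal_cos_last_eq_0[OF ps W W' x x_orth])
  moreover have "dim W \<noteq> 0" using x by (auto simp: dim_eq_0)
  ultimately show ?thesis unfolding sin_Theta_norm_def angles by simp
qed

section \<open>The Lifshitz--Petrich Hessian\<close>

lemma LP_lin_axis:
  fixes grid :: "'g::finite \<Rightarrow> 'n::finite \<Rightarrow> nat"
  shows "LP_lin A B N grid q1 q2 (axis t 1) $ s =
    (\<Sum>k\<in>modes N. LP_symbol q1 q2 B k *
       cos (freq B k \<bullet> grid_pt A N grid s - freq B k \<bullet> grid_pt A N grid t)) / real CARD('g)"
proof -
  let ?\<phi> = "\<lambda>k s. freq B k \<bullet> grid_pt A N grid s"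
  have DFT_axis: "DFT A B N grid (axis t 1) k = exp (- \<i> * of_real (?\<phi> k t)) / of_nat CARD('g)" for k
    unfolding DFT_def axis_def
    by (simp add: if_distrib[of complex_of_real] if_distrib[of "\<lambda>x. x * _"] sum.delta cong: if_cong)
  have "exp (- \<i> * of_real (?\<phi> k t)) * exp (\<i> * of_real (?\<phi> k s)) = exp (\<i> * of_real (?\<phi> k s - ?\<phi> k t))"
    for k by (simp add: exp_add[symmetric] algebra_simps)
  then have "Re (of_real (LP_symbol q1 q2 B k) * DFT A B N grid (axis t 1) k * exp (\<i> * of_real (?\<phi> k s)))
      = LP_symbol q1 q2 B k * cos (?\<phi> k s - ?\<phi> k t) / real CARD('g)" for k
    unfolding DFT_axis by (simp add: Re_exp mult.assoc)
  then show ?thesis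
    unfolding LP_lin_def IDFT_def vec_lambda_beta Re_sum by (simp add: sum_divide_distrib)
qed

lemma LP_hess_symmetric: "transpose (LP_hess A B N grid q1 q2 \<epsilon> \<alpha> U) = LP_hess A B N grid q1 q2 \<epsilon> \<alpha> U"
proof -
  have "LP_lin A B N grid q1 q2 (axis j 1) $ i = LP_lin A B N grid q1 q2 (axis i 1) $ j" for i j
    unfolding LP_lin_axis by (subst cos_minus[symmetric]) (simp only: minus_diff_eq)
  then show ?thesis
    unfolding LP_hess_def by (simp add: vec_eq_iff transpose_def)
qed

lemma gip_eq_inner: "gip v w = (v \<bullet> w) / real CARD('g)"
  for v w :: "real^'g::finite"
  by (simp add: gip_def inner_vec_def)

theorem lemma4p1:
  fixes A B :: "real^'n::finite^'n" and N :: nat and grid :: "'g::finite \<Rightarrow> 'n \<Rightarrow> nat"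
    and q1 q2 \<epsilon> \<alpha> :: real and U Ubar v :: "real^'g"
  assumes "invertible A"
    and "A ** transpose B = (2 * pi) *\<^sub>R mat 1"
    and "bij_betw grid UNIV {j. \<forall>i. j i < N}"
    and "\<exists>Ustar. is_GLM A B N grid q1 q2 \<epsilon> \<alpha> Ustar
                \<and> in_GQR A B N grid q1 q2 \<epsilon> \<alpha> Ustar U
                \<and> in_GQR A B N grid q1 q2 \<epsilon> \<alpha> Ustar Ubar"
    and "dim (Wk (LP_hess A B N grid q1 q2 \<epsilon> \<alpha> U))
           \<le> dim (Wk (LP_hess A B N grid q1 q2 \<epsilon> \<alpha> Ubar))"
    and "sin_Theta_norm (Wk (LP_hess A B N grid q1 q2 \<epsilon> \<alpha> U))
                        (Wk (LP_hess A B N grid q1 q2 \<epsilon> \<alpha> Ubar)) < 1"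
    and "is_constrained_min (LP_hess A B N grid q1 q2 \<epsilon> \<alpha> U)
                            (Wk (LP_hess A B N grid q1 q2 \<epsilon> \<alpha> Ubar)) v"
  shows "orth_proj (Ws (LP_hess A B N grid q1 q2 \<epsilon> \<alpha> U)) v \<noteq> 0"
proof
  let ?H = "\<lambda>X. LP_hess A B N grid q1 q2 \<epsilon> \<alpha> X"
  assume proj: "orth_proj (Ws (?H U)) v = 0"
  have v_orth_Ws: "v \<bullet> w = 0" if "w \<in> Ws (?H U)" for w
    by (rule orth_proj_eq_0_imp_orthogonal[OF subspace_Ws proj that])
  obtain Ustar where "is_GLM A B N grid q1 q2 \<epsilon> \<alpha> Ustar" "in_GQR A B N grid q1 q2 \<epsilon> \<alpha> Ustar U"
    using assms(4) by blast
  then have "no_neg_eigval (?H U)"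
    unfolding is_GLM_def in_GQR_def by (simp add: neg_index_eq_0_iff[OF LP_hess_symmetric, symmetric])
  then have "v \<in> Wk (?H U)"
    using orthogonal_Ws_imp_kernel[OF LP_hess_symmetric _ v_orth_Ws] by (simp add: Wk_eq_kernel)
  moreover have "v \<noteq> 0" and "\<And>w. w \<in> Wk (?H Ubar) \<Longrightarrow> v \<bullet> w = 0"
    using assms(7) unfolding is_constrained_min_def gip_eq_inner by auto
  ultimately have "sin_Theta_norm (Wk (?H U)) (Wk (?H Ubar)) = 1"
    by (rule sin_Theta_norm_eq_1_if_orthogonal[OF subspace_Wk subspace_Wk assms(5)])
  with assms(6) show False by simp
qed

end
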